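(* Let $\mathcal S=(E,\mathcal I)$ and $\mathcal S'=(E',\mathcal I')$ be $r$-covering systems with $|E|=|E'|$ that are similar, i.e., there is a bijection $\psi:\mathcal I\to\mathcal I'$ with $|\psi(X)|=|X|$ for all $X\in\mathcal I$. If $\texttt{a}$ is an activity of $\mathcal S$ and $\texttt{a}'$ is an activity of $\mathcal S'$, then their activity vectors are equal.
   Context: For finite sets $X\subseteq Y$, write $[X,Y]=\{Z: X\subseteq Z\subseteq Y\}$. An $r$-covering system is a pair $\mathcal S=(E,\mathcal I)$ where $E$ is a finite set and $\mathcal I$ is a collection of subsets of $E$, each of cardinality at most $r$, such that for every $I\in\mathcal I$ there exists $B\in\mathcal I$ with $|B|=r$ and $[I,B]\subseteq\mathcal I$. Members of $\mathcal I$ of cardinality $r$ are called bases, and $\mathcal B$ denotes the set of bases. An activity of $\mathcal S$ is a function $\texttt{a}:\mathcal B\to 2^E$ such that for every $B\in\mathcal B$, $\texttt{a}(B)\subseteq B$ and $[B\setminus\texttt{a}(B),B]\subseteq\mathcal I$, and such that every $I\in\mathcal I$ belongs to $[B\setminus\texttt{a}(B),B]$ for exactly one $B\in\mathcal B$. The activity vector is $(a_0,\dots,a_r)$ where $a_i$ is the number of bases $B$ with $|\texttt{a}(B)|=i$. *)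

theory Defs
  imports Main
begin

definition interval :: "'a set \<Rightarrow> 'a set \<Rightarrow> 'a set set" where
  "interval X Y = {Z. X \<subseteq> Z \<and> Z \<subseteq> Y}"

definition covering_system :: "nat \<Rightarrow> 'a set \<Rightarrow> 'a set set \<Rightarrow> bool" where
  "covering_system r E \<I> \<longleftrightarrow> finite E \<and>
     (\<forall>I\<in>\<I>. I \<subseteq> E \<and> card I \<le> r) \<and>
     (\<forall>I\<in>\<I>. \<exists>B\<in>\<I>. card B = r \<and> interval I B \<subseteq> \<I>)"

definition bases :: "nat \<Rightarrow> 'a set set \<Rightarrow> 'a set set" where
  "bases r \<I> = {B \<in> \<I>. card B = r}"

definition is_activity :: "nat \<Rightarrow> 'a set set \<Rightarrow> ('a set \<Rightarrow> 'a set) \<Rightarrow> bool" where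
  "is_activity r \<I> a \<longleftrightarrow>
     (\<forall>B\<in>bases r \<I>. a B \<subseteq> B \<and> interval (B - a B) B \<subseteq> \<I>) \<and>
     (\<forall>I\<in>\<I>. \<exists>!B. B \<in> bases r \<I> \<and> I \<in> interval (B - a B) B)"

definition activity_vector :: "nat \<Rightarrow> 'a set set \<Rightarrow> ('a set \<Rightarrow> 'a set) \<Rightarrow> nat list" where
  "activity_vector r \<I> a = map (\<lambda>i. card {B \<in> bases r \<I>. card (a B) = i}) [0..<Suc r]"

definition similar :: "'a set set \<Rightarrow> 'b set set \<Rightarrow> bool" where
  "similar \<I> \<I>' \<longleftrightarrow> (\<exists>\<psi>. bij_betw \<psi> \<I> \<I>' \<and> (\<forall>X\<in>\<I>. card (\<psi> X) = card X))"

end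

theory Submission
  imports Defs
begin

text \<open>An activity partitions \<open>\<I>\<close> into the intervals \<open>[B - a B, B]\<close>, and such an interval
  contains \<open>|a B| choose (r - k)\<close> sets of size \<open>k\<close>.  Hence the number \<open>f\<^sub>k\<close> of size-\<open>k\<close> members
  of \<open>\<I>\<close> is \<open>\<Sum>\<^sub>i a\<^sub>i (i choose (r - k))\<close>.  This transform is triangular with unit diagonal, so
  the activity vector is determined by \<open>(f\<^sub>0, \<dots>, f\<^sub>r)\<close>, which a cardinality-preserving
  bijection \<open>\<I> \<rightarrow> \<I>'\<close> preserves.\<close>

definition level :: "'a set set \<Rightarrow> nat \<Rightarrow> 'a set set" where
  "level \<I> k = {X \<in> \<I>. card X = k}"

definition activity_count :: "nat \<Rightarrow> 'a set set \<Rightarrow> ('a set \<Rightarrow> 'a set) \<Rightarrow> nat \<Rightarrow> nat" where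
  "activity_count r \<I> a i = card {B \<in> bases r \<I>. card (a B) = i}"

lemma card_level_interval:
  assumes "finite B" and "A \<subseteq> B" and "k \<le> card B"
  shows "card (level (interval (B - A) B) k) = card A choose (card B - k)"
proof -
  have "bij_betw (\<lambda>X. B - X) (level (interval (B - A) B) k) {S. S \<subseteq> A \<and> card S = card B - k}"
  proof (rule bij_betw_byWitness[where f' = "\<lambda>S. B - S"])
    show "(\<lambda>X. B - X) ` level (interval (B - A) B) k \<subseteq> {S. S \<subseteq> A \<and> card S = card B - k}"
      using assms(1) by (auto simp: level_def interval_def card_Diff_subset finite_subset)
    show "(\<lambda>S. B - S) ` {S. S \<subseteq> A \<and> card S = card B - k} \<subseteq> level (interval (B - A) B) k"
      using assms by (auto simp: level_def interval_def card_Diff_subset finite_subset)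
  qed (use assms(2) in \<open>auto simp: level_def interval_def\<close>)
  then have "card (level (interval (B - A) B) k) = card {S. S \<subseteq> A \<and> card S = card B - k}"
    by (rule bij_betw_same_card)
  also have "\<dots> = card A choose (card B - k)"
    using assms(1,2) by (simp add: n_subsets finite_subset)
  finally show ?thesis .
qed

lemma covering_system_finite:
  assumes "covering_system r E \<I>"
  shows "finite \<I>" and "\<And>X. X \<in> \<I> \<Longrightarrow> finite X"
  using assms unfolding covering_system_def
  by (auto intro: finite_subset[of _ "Pow E"] finite_subset[of _ E])

lemma activity_intervals_cover:
  assumes "is_activity r \<I> a"
  shows "\<I> = (\<Union>B\<in>bases r \<I>. interval (B - a B) B)"
  using assms unfolding is_activity_def by blast

lemma activity_intervals_disjoint:
  assumes "is_activity r \<I> a" and "B \<in> bases r \<I>" and "B' \<in> bases r \<I>" and "B \<noteq> B'"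
  shows "interval (B - a B) B \<inter> interval (B' - a B') B' = {}"
proof (rule ccontr)
  assume "interval (B - a B) B \<inter> interval (B' - a B') B' \<noteq> {}"
  then obtain X where X: "X \<in> interval (B - a B) B" "X \<in> interval (B' - a B') B'"
    by blast
  with assms(1,2) have "\<exists>!C. C \<in> bases r \<I> \<and> X \<in> interval (C - a C) C"
    unfolding is_activity_def by blast
  with X assms(2-4) show False by blast
qed

lemma card_level_activity:
  assumes cs: "covering_system r E \<I>" and act: "is_activity r \<I> a" and "k \<le> r"
  shows "card (level \<I> k) =
    (\<Sum>i\<le>r. activity_count r \<I> a i * (i choose (r - k)))"
proof -
  have fin_bases: "finite (bases r \<I>)"
    using covering_system_finite(1)[OF cs] by (simp add: bases_def)
  have base: "finite B" "card B = r" "a B \<subseteq> B" "interval (B - a B) B \<subseteq> \<I>"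
    if "B \<in> bases r \<I>" for B
    using that act covering_system_finite(2)[OF cs]
    by (auto simp: bases_def is_activity_def)
  have activity_le: "card (a B) \<le> r" if "B \<in> bases r \<I>" for B
    using base[OF that] card_mono by metis
  have "level \<I> k = (\<Union>B\<in>bases r \<I>. level (interval (B - a B) B) k)"
    by (subst activity_intervals_cover[OF act]) (auto simp: level_def)
  then have "card (level \<I> k) = (\<Sum>B\<in>bases r \<I>. card (level (interval (B - a B) B) k))"
    using fin_bases activity_intervals_disjoint[OF act] base(4)
      covering_system_finite(1)[OF cs]
    by (auto intro!: card_UN_disjoint simp: level_def intro: finite_subset)
  also have "\<dots> = (\<Sum>B\<in>bases r \<I>. card (a B) choose (r - k))"
    using base card_level_interval \<open>k \<le> r\<close> by (intro sum.cong) fastforce+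
  also have "\<dots> = (\<Sum>i\<le>r. \<Sum>B\<in>{B \<in> bases r \<I>. card (a B) = i}. card (a B) choose (r - k))"
    using activity_le by (intro sum.group[symmetric] fin_bases) auto
  also have "\<dots> = (\<Sum>i\<le>r. activity_count r \<I> a i * (i choose (r - k)))"
    by (simp add: activity_count_def)
  finally show ?thesis .
qed

lemma binomial_transform_inj:
  fixes x y :: "nat \<Rightarrow> nat"
  assumes eq: "\<And>j. j \<le> r \<Longrightarrow> (\<Sum>i\<le>r. x i * (i choose j)) = (\<Sum>i\<le>r. y i * (i choose j))"
    and "j \<le> r"
  shows "x j = y j"
  using \<open>j \<le> r\<close>
proof (induction j rule: measure_induct_rule[where f = "\<lambda>j. r - j"])
  case (less j)
  have split: "(\<Sum>i\<le>r. z i * (i choose j)) = z j + (\<Sum>i\<in>{Suc j..r}. z i * (i choose j))"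
    for z :: "nat \<Rightarrow> nat"
  proof -
    have "(\<Sum>i\<le>r. z i * (i choose j)) = (\<Sum>i\<in>{j..r}. z i * (i choose j))"
      by (rule sum.mono_neutral_right) auto
    also have "{j..r} = insert j {Suc j..r}"
      using less.prems by auto
    finally show ?thesis by simp
  qed
  have "(\<Sum>i\<in>{Suc j..r}. x i * (i choose j)) = (\<Sum>i\<in>{Suc j..r}. y i * (i choose j))"
    using less.IH by (intro sum.cong) auto
  then show ?case
    using eq[OF less.prems] split[of x] split[of y] by simp
qed

lemma similar_card_level:
  assumes "similar \<I> \<I>'"
  shows "card (level \<I> k) = card (level \<I>' k)"
proof -
  obtain \<psi> where bij: "bij_betw \<psi> \<I> \<I>'" and card_\<psi>: "\<forall>X\<in>\<I>. card (\<psi> X) = card X"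
    using assms unfolding similar_def by blast
  have "\<psi> ` level \<I> k = level \<I>' k"
    using bij card_\<psi> unfolding level_def bij_betw_def by force
  moreover have "bij_betw \<psi> (level \<I> k) (\<psi> ` level \<I> k)"
    using bij by (auto intro: bij_betw_subset simp: level_def)
  ultimately show ?thesis
    by (metis bij_betw_same_card)
qed

theorem mainTheorem5:
  fixes E :: "'a set" and \<I> :: "'a set set" and E' :: "'b set" and \<I>' :: "'b set set"
    and a :: "'a set \<Rightarrow> 'a set" and a' :: "'b set \<Rightarrow> 'b set" and r :: nat
  assumes "covering_system r E \<I>" and "covering_system r E' \<I>'"
    and "card E = card E'"
    and "similar \<I> \<I>'"
    and "is_activity r \<I> a" and "is_activity r \<I>' a'"
  shows "activity_vector r \<I> a = activity_vector r \<I>' a'"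
proof -
  have "activity_count r \<I> a j = activity_count r \<I>' a' j"
    if "j \<le> r" for j
  proof (rule binomial_transform_inj[OF _ that])
    fix i assume "i \<le> r"
    then have i: "r - (r - i) = i" "r - i \<le> r" by auto
    have "(\<Sum>k\<le>r. activity_count r \<I> a k * (k choose i)) = card (level \<I> (r - i))"
      using card_level_activity[OF assms(1,5) i(2)] by (simp add: i(1))
    also have "\<dots> = card (level \<I>' (r - i))"
      by (rule similar_card_level[OF assms(4)])
    also have "\<dots> = (\<Sum>k\<le>r. activity_count r \<I>' a' k * (k choose i))"
      using card_level_activity[OF assms(2,6) i(2)] by (simp add: i(1))
    finally show "(\<Sum>k\<le>r. activity_count r \<I> a k * (k choose i)) =
        (\<Sum>k\<le>r. activity_count r \<I>' a' k * (k choose i))" .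
  qed
  then show ?thesis
    unfolding activity_vector_def activity_count_def[symmetric] by (auto intro: map_cong)
qed

end
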